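(* For every Lie–Leibniz triple $(\mathfrak g,V,\Theta)$, the Lie superalgebra $L=L(\mathfrak g,V,\Theta)$ is $(-2,2)$-transitive.
   Context: Ground field $\mathbb{K}=\mathbb{R}$ or $\mathbb{C}$; all spaces $\mathbb{Z}$-graded with parity equal to degree mod 2; subalgebras and ideals are graded. $G_\pm=\bigoplus_{k\ge1}G_{\pm k}$, $G_{m-}=\bigoplus_{k\le m}G_k$, $G_{n+}=\bigoplus_{k\ge n}G_k$. A Lie superalgebra $G$ is $(m,n)$-transitive if for $x\in G_{n+}$, $[G_-,x]=0$ implies $x=0$, and for $x\in G_{m-}$, $[G_+,x]=0$ implies $x=0$. A Lie–Leibniz triple $(\mathfrak g,V,\Theta)$ consists of a Lie algebra $\mathfrak g$, a $\mathfrak g$-module $V$ (action $x\cdot u$) and a linear map $\Theta:V\to\mathfrak g$ with $\Theta(\Theta(u)\cdot v)=[\Theta(u),\Theta(v)]$ for all $u,v$. Construction of $\mathbb U$: $\mathbb U_0=\mathfrak g$, $\mathbb U_1=V[-1]$ ($V$ in degree 1, odd), $\mathbb U_{-p+1}=\mathrm{Hom}(\mathbb U_1,\mathbb U_{-p+2})$ for $p\ge2$; brackets on $\mathbb U_{1-}$: Lie bracket on $\mathfrak g$, and recursively $[x,u]=x(u)$, $[u,x]=-(-1)^{|x|}x(u)$, $[x,y](u)=[x,y(u)]+(-1)^{|y|}[x(u),y]$ for $x,y\in\mathbb U_{0-}$, $u\in\mathbb U_1$, where $x(u)=x\cdot u$ for $x\in\mathfrak g$; $\mathbb U$ is the unique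 Lie superalgebra extending this semilocal Lie superalgebra with $\mathbb U_+$ free on $\mathbb U_1$. $\Theta$ is regarded as an element of $\mathbb U_{-1}$; $R_\Theta\subseteq\mathbb U_{-1}$ is the $\mathfrak g$-submodule generated by $\Theta$ under $x\cdot\phi=[x,\phi]$. Let $\sigma:\mathbb U_2\to\mathbb U_1$ be linear with $\sigma([u,v])=\tfrac12(\Theta(u)\cdot v+\Theta(v)\cdot u)$, and $K$ the sum of all $\mathfrak g$-submodules of $\mathbb U_2$ contained in $\ker\sigma$. Construction of $L$: let $\mathbb S$ be the subalgebra of $\mathbb U$ generated by $R_\Theta\oplus\mathfrak g\oplus\mathbb U_1$; let $\mathscr K$ be the ideal of $\mathbb S$ generated by $K$ (it is contained in $\mathbb U_{2+}$); $\mathbb T=\mathbb S/\mathscr K$; and $L(\mathfrak g,V,\Theta)=\mathbb T/J$, where $J$ is the sum of all ideals of $\mathbb T$ contained in $\mathbb T_{3+}$. *)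

theory Defs
  imports Complex_Main
begin

definition field_is_R_or_C :: "'k::field itself \<Rightarrow> bool" where
  "field_is_R_or_C _ \<longleftrightarrow>
     (\<exists>f::'k \<Rightarrow> real. bij f \<and> (\<forall>a b. f (a + b) = f a + f b \<and> f (a * b) = f a * f b)) \<or>
     (\<exists>f::'k \<Rightarrow> complex. bij f \<and> (\<forall>a b. f (a + b) = f a + f b \<and> f (a * b) = f a * f b))"

definition bilin :: "('k::field \<Rightarrow> 'a::ab_group_add \<Rightarrow> 'a) \<Rightarrow> ('k \<Rightarrow> 'b::ab_group_add \<Rightarrow> 'b)
     \<Rightarrow> ('k \<Rightarrow> 'c::ab_group_add \<Rightarrow> 'c) \<Rightarrow> ('a \<Rightarrow> 'b \<Rightarrow> 'c) \<Rightarrow> bool" where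
  "bilin s1 s2 s3 f \<longleftrightarrow> (\<forall>x. Vector_Spaces.linear s2 s3 (f x)) \<and> (\<forall>y. Vector_Spaces.linear s1 s3 (\<lambda>x. f x y))"

definition lie_algebra :: "('k::field \<Rightarrow> 'g::ab_group_add \<Rightarrow> 'g) \<Rightarrow> ('g \<Rightarrow> 'g \<Rightarrow> 'g) \<Rightarrow> bool" where
  "lie_algebra sg bg \<longleftrightarrow> vector_space sg \<and> bilin sg sg sg bg \<and> (\<forall>x. bg x x = 0) \<and>
     (\<forall>x y z. bg x (bg y z) + bg y (bg z x) + bg z (bg x y) = 0)"

definition lie_module :: "('k::field \<Rightarrow> 'g::ab_group_add \<Rightarrow> 'g) \<Rightarrow> ('g \<Rightarrow> 'g \<Rightarrow> 'g)
     \<Rightarrow> ('k \<Rightarrow> 'v::ab_group_add \<Rightarrow> 'v) \<Rightarrow> ('g \<Rightarrow> 'v \<Rightarrow> 'v) \<Rightarrow> bool" where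
  "lie_module sg bg sv act \<longleftrightarrow> lie_algebra sg bg \<and> vector_space sv \<and> bilin sg sv sv act \<and>
     (\<forall>x y u. act (bg x y) u = act x (act y u) - act y (act x u))"

definition lie_leibniz_triple :: "('k::field \<Rightarrow> 'g::ab_group_add \<Rightarrow> 'g) \<Rightarrow> ('g \<Rightarrow> 'g \<Rightarrow> 'g)
     \<Rightarrow> ('k \<Rightarrow> 'v::ab_group_add \<Rightarrow> 'v) \<Rightarrow> ('g \<Rightarrow> 'v \<Rightarrow> 'v) \<Rightarrow> ('v \<Rightarrow> 'g) \<Rightarrow> bool" where
  "lie_leibniz_triple sg bg sv act Th \<longleftrightarrow> lie_module sg bg sv act \<and> Vector_Spaces.linear sv sg Th \<and>
     (\<forall>u v. Th (act (Th u) v) = bg (Th u) (Th v))"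

section \<open>Z-graded Lie superalgebras (parity = degree mod 2)\<close>

text \<open>The whole type 'u is the superalgebra; Gr k is its homogeneous component of degree k.\<close>

definition psign :: "int \<Rightarrow> 'u::ab_group_add \<Rightarrow> 'u" where
  "psign n x = (if even n then x else - x)"

definition graded_lie_superalgebra :: "('k::field \<Rightarrow> 'u::ab_group_add \<Rightarrow> 'u) \<Rightarrow> ('u \<Rightarrow> 'u \<Rightarrow> 'u)
     \<Rightarrow> (int \<Rightarrow> 'u set) \<Rightarrow> bool" where
  "graded_lie_superalgebra su bu Gr \<longleftrightarrow>
     vector_space su \<and> (\<forall>k. module.subspace su (Gr k)) \<and>
     (\<forall>x. \<exists>!c::int \<Rightarrow> 'u. finite {k. c k \<noteq> 0} \<and> (\<forall>k. c k \<in> Gr k) \<and> x = (\<Sum>k\<in>{k. c k \<noteq> 0}. c k)) \<and>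
     bilin su su su bu \<and>
     (\<forall>i j x y. x \<in> Gr i \<longrightarrow> y \<in> Gr j \<longrightarrow> bu x y \<in> Gr (i + j)) \<and>
     (\<forall>i j x y. x \<in> Gr i \<longrightarrow> y \<in> Gr j \<longrightarrow> bu x y = - psign (i * j) (bu y x)) \<and>
     (\<forall>i j x y z. x \<in> Gr i \<longrightarrow> y \<in> Gr j \<longrightarrow>
        bu x (bu y z) = bu (bu x y) z + psign (i * j) (bu y (bu x z)))"

definition deg_ge :: "('k::field \<Rightarrow> 'u::ab_group_add \<Rightarrow> 'u) \<Rightarrow> (int \<Rightarrow> 'u set) \<Rightarrow> int \<Rightarrow> 'u set" where
  "deg_ge su Gr n = module.span su (\<Union>k\<in>{n..}. Gr k)"

definition deg_le :: "('k::field \<Rightarrow> 'u::ab_group_add \<Rightarrow> 'u) \<Rightarrow> (int \<Rightarrow> 'u set) \<Rightarrow> int \<Rightarrow> 'u set" where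
  "deg_le su Gr m = module.span su (\<Union>k\<in>{..m}. Gr k)"

definition gen_subalg :: "('k::field \<Rightarrow> 'u::ab_group_add \<Rightarrow> 'u) \<Rightarrow> ('u \<Rightarrow> 'u \<Rightarrow> 'u) \<Rightarrow> 'u set \<Rightarrow> 'u set" where
  "gen_subalg su bu X = \<Inter>{W. module.subspace su W \<and> X \<subseteq> W \<and> (\<forall>a\<in>W. \<forall>b\<in>W. bu a b \<in> W)}"

definition gen_ideal :: "('k::field \<Rightarrow> 'u::ab_group_add \<Rightarrow> 'u) \<Rightarrow> ('u \<Rightarrow> 'u \<Rightarrow> 'u) \<Rightarrow> 'u set \<Rightarrow> 'u set \<Rightarrow> 'u set" where
  "gen_ideal su bu S X = \<Inter>{I. module.subspace su I \<and> X \<subseteq> I \<and> (\<forall>s\<in>S. \<forall>a\<in>I. bu s a \<in> I)}"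

definition graded_set :: "('k::field \<Rightarrow> 'u::ab_group_add \<Rightarrow> 'u) \<Rightarrow> (int \<Rightarrow> 'u set) \<Rightarrow> 'u set \<Rightarrow> bool" where
  "graded_set su Gr I \<longleftrightarrow> I \<subseteq> module.span su (\<Union>k. I \<inter> Gr k)"

definition graded_ideal :: "('k::field \<Rightarrow> 'u::ab_group_add \<Rightarrow> 'u) \<Rightarrow> ('u \<Rightarrow> 'u \<Rightarrow> 'u) \<Rightarrow> (int \<Rightarrow> 'u set)
     \<Rightarrow> 'u set \<Rightarrow> 'u set \<Rightarrow> bool" where
  "graded_ideal su bu Gr S I \<longleftrightarrow> module.subspace su I \<and> I \<subseteq> S \<and> graded_set su Gr I \<and>
     (\<forall>s\<in>S. \<forall>a\<in>I. bu s a \<in> I)"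

text \<open>(m,n)-transitivity of the quotient S/I of a graded subalgebra S by a graded ideal I,
  written out on representatives: the class of x is 0 iff x is in I; [y,x] = 0 in S/I iff bu y x is in I.\<close>
definition quot_transitive :: "('k::field \<Rightarrow> 'u::ab_group_add \<Rightarrow> 'u) \<Rightarrow> ('u \<Rightarrow> 'u \<Rightarrow> 'u) \<Rightarrow> (int \<Rightarrow> 'u set)
     \<Rightarrow> 'u set \<Rightarrow> 'u set \<Rightarrow> int \<Rightarrow> int \<Rightarrow> bool" where
  "quot_transitive su bu Gr S I m n \<longleftrightarrow>
     (\<forall>x \<in> S \<inter> deg_ge su Gr n. (\<forall>y \<in> S \<inter> deg_le su Gr (-1). bu y x \<in> I) \<longrightarrow> x \<in> I) \<and>
     (\<forall>x \<in> S \<inter> deg_le su Gr m. (\<forall>y \<in> S \<inter> deg_ge su Gr 1. bu y x \<in> I) \<longrightarrow> x \<in> I)"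

text \<open>Test algebra: the tensor algebra T(V), realised faithfully as functions on lists of linear
  functionals on V (an element of degree n is a function supported on lists of length n), with the
  concatenation product.  Equalities are only required on lists of linear functionals.\<close>

definition lin_functional :: "('k::field \<Rightarrow> 'v::ab_group_add \<Rightarrow> 'v) \<Rightarrow> ('v \<Rightarrow> 'k) \<Rightarrow> bool" where
  "lin_functional sv f \<longleftrightarrow> (\<forall>x y. f (x + y) = f x + f y) \<and> (\<forall>c x. f (sv c x) = c * f x)"

definition tmul :: "(('v \<Rightarrow> 'k) list \<Rightarrow> 'k::field) \<Rightarrow> (('v \<Rightarrow> 'k) list \<Rightarrow> 'k) \<Rightarrow> ('v \<Rightarrow> 'k) list \<Rightarrow> 'k" where
  "tmul a b fs = (\<Sum>i\<le>length fs. a (take i fs) * b (drop i fs))"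

definition temb :: "'v \<Rightarrow> ('v \<Rightarrow> 'k::field) list \<Rightarrow> 'k" where
  "temb v fs = (if length fs = 1 then hd fs v else 0)"

text \<open>U_+ (the span of positive degrees) is the free Lie superalgebra on the odd space U_1 = V
  (via i1): it is generated by U_1 and the embedding V into T(V) extends to a Lie superalgebra
  morphism U_+ to T(V) (with super-commutator).  Since the free Lie superalgebra embeds in T(V)
  (characteristic 0) this is equivalent to freeness.\<close>
definition positive_part_free :: "('k::field \<Rightarrow> 'u::ab_group_add \<Rightarrow> 'u) \<Rightarrow> ('u \<Rightarrow> 'u \<Rightarrow> 'u) \<Rightarrow> (int \<Rightarrow> 'u set)
     \<Rightarrow> ('k \<Rightarrow> 'v::ab_group_add \<Rightarrow> 'v) \<Rightarrow> ('v \<Rightarrow> 'u) \<Rightarrow> bool" where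
  "positive_part_free su bu Gr sv i1 \<longleftrightarrow>
     deg_ge su Gr 1 \<subseteq> gen_subalg su bu (Gr 1) \<and>
     (\<exists>\<phi> :: 'u \<Rightarrow> ('v \<Rightarrow> 'k) list \<Rightarrow> 'k.
        (\<forall>fs. list_all (lin_functional sv) fs \<longrightarrow>
          (\<forall>x\<in>deg_ge su Gr 1. \<forall>y\<in>deg_ge su Gr 1. \<phi> (x + y) fs = \<phi> x fs + \<phi> y fs) \<and>
          (\<forall>c. \<forall>x\<in>deg_ge su Gr 1. \<phi> (su c x) fs = c * \<phi> x fs) \<and>
          (\<forall>v. \<phi> (i1 v) fs = temb v fs) \<and>
          (\<forall>p q x y. p \<ge> 1 \<longrightarrow> q \<ge> 1 \<longrightarrow> x \<in> Gr p \<longrightarrow> y \<in> Gr q \<longrightarrow>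
             \<phi> (bu x y) fs = tmul (\<phi> x) (\<phi> y) fs - (if even (p * q) then 1 else -1) * tmul (\<phi> y) (\<phi> x) fs)))"

text \<open>U realises the construction: U_0 = g (via i0), U_1 = V (via i1), U_{-p} = Hom(U_1, U_{-p+1})
  for p \<ge> 1 via x \<mapsto> (u \<mapsto> [x,u]), U_+ free on U_1, and th \<in> U_{-1} is Theta.\<close>
definition is_U :: "('k::field \<Rightarrow> 'g::ab_group_add \<Rightarrow> 'g) \<Rightarrow> ('g \<Rightarrow> 'g \<Rightarrow> 'g)
     \<Rightarrow> ('k \<Rightarrow> 'v::ab_group_add \<Rightarrow> 'v) \<Rightarrow> ('g \<Rightarrow> 'v \<Rightarrow> 'v) \<Rightarrow> ('v \<Rightarrow> 'g)
     \<Rightarrow> ('k \<Rightarrow> 'u::ab_group_add \<Rightarrow> 'u) \<Rightarrow> ('u \<Rightarrow> 'u \<Rightarrow> 'u) \<Rightarrow> (int \<Rightarrow> 'u set)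
     \<Rightarrow> ('g \<Rightarrow> 'u) \<Rightarrow> ('v \<Rightarrow> 'u) \<Rightarrow> 'u \<Rightarrow> bool" where
  "is_U sg bg sv act Th su bu Gr i0 i1 th \<longleftrightarrow>
     graded_lie_superalgebra su bu Gr \<and>
     Vector_Spaces.linear sg su i0 \<and> inj i0 \<and> range i0 = Gr 0 \<and> (\<forall>x y. bu (i0 x) (i0 y) = i0 (bg x y)) \<and>
     Vector_Spaces.linear sv su i1 \<and> inj i1 \<and> range i1 = Gr 1 \<and> (\<forall>x u. bu (i0 x) (i1 u) = i1 (act x u)) \<and>
     (\<forall>p::int. p \<ge> 1 \<longrightarrow> bij_betw (\<lambda>x u. bu x (i1 u)) (Gr (-p))
         {f. Vector_Spaces.linear sv su f \<and> range f \<subseteq> Gr (-p + 1)}) \<and>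
     positive_part_free su bu Gr sv i1 \<and>
     th \<in> Gr (-1) \<and> (\<forall>u. bu th (i1 u) = i0 (Th u))"

definition R_Theta :: "('k::field \<Rightarrow> 'u::ab_group_add \<Rightarrow> 'u) \<Rightarrow> ('u \<Rightarrow> 'u \<Rightarrow> 'u) \<Rightarrow> (int \<Rightarrow> 'u set) \<Rightarrow> 'u \<Rightarrow> 'u set" where
  "R_Theta su bu Gr th = \<Inter>{W. module.subspace su W \<and> th \<in> W \<and> (\<forall>x\<in>Gr 0. \<forall>w\<in>W. bu x w \<in> W)}"

definition S_alg :: "('k::field \<Rightarrow> 'u::ab_group_add \<Rightarrow> 'u) \<Rightarrow> ('u \<Rightarrow> 'u \<Rightarrow> 'u) \<Rightarrow> (int \<Rightarrow> 'u set) \<Rightarrow> 'u \<Rightarrow> 'u set" where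
  "S_alg su bu Gr th = gen_subalg su bu (R_Theta su bu Gr th \<union> Gr 0 \<union> Gr 1)"

text \<open>sigma : U_2 \<rightarrow> U_1 linear, sigma([u,v]) = 1/2 (Theta(u).v + Theta(v).u); in U, Theta(u).v = [[th,u],v].\<close>
definition is_sigma :: "('k::field \<Rightarrow> 'u::ab_group_add \<Rightarrow> 'u) \<Rightarrow> ('u \<Rightarrow> 'u \<Rightarrow> 'u) \<Rightarrow> (int \<Rightarrow> 'u set) \<Rightarrow> 'u
     \<Rightarrow> ('u \<Rightarrow> 'u) \<Rightarrow> bool" where
  "is_sigma su bu Gr th \<sigma> \<longleftrightarrow>
     (\<forall>a\<in>Gr 2. \<sigma> a \<in> Gr 1) \<and>
     (\<forall>a\<in>Gr 2. \<forall>b\<in>Gr 2. \<sigma> (a + b) = \<sigma> a + \<sigma> b) \<and>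
     (\<forall>c. \<forall>a\<in>Gr 2. \<sigma> (su c a) = su c (\<sigma> a)) \<and>
     (\<forall>u\<in>Gr 1. \<forall>v\<in>Gr 1. \<sigma> (bu u v) = su (1/2) (bu (bu th u) v + bu (bu th v) u))"

definition K_mod :: "('k::field \<Rightarrow> 'u::ab_group_add \<Rightarrow> 'u) \<Rightarrow> ('u \<Rightarrow> 'u \<Rightarrow> 'u) \<Rightarrow> (int \<Rightarrow> 'u set)
     \<Rightarrow> ('u \<Rightarrow> 'u) \<Rightarrow> 'u set" where
  "K_mod su bu Gr \<sigma> = module.span su (\<Union>{W. module.subspace su W \<and> W \<subseteq> Gr 2 \<and>
       (\<forall>x\<in>Gr 0. \<forall>w\<in>W. bu x w \<in> W) \<and> (\<forall>w\<in>W. \<sigma> w = 0)})"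

text \<open>The ideal I of S with L = (S / calK) / J = S / I: calK is the ideal of S generated by K,
  and I is the preimage of J, i.e. the sum of all graded ideals I' of S with calK \<subseteq> I' and
  I'/calK \<subseteq> T_{3+}, i.e. I' \<subseteq> calK + S_{3+}.\<close>
definition L_ideal :: "('k::field \<Rightarrow> 'u::ab_group_add \<Rightarrow> 'u) \<Rightarrow> ('u \<Rightarrow> 'u \<Rightarrow> 'u) \<Rightarrow> (int \<Rightarrow> 'u set) \<Rightarrow> 'u
     \<Rightarrow> ('u \<Rightarrow> 'u) \<Rightarrow> 'u set" where
  "L_ideal su bu Gr th \<sigma> =
    (let S = S_alg su bu Gr th;
         cK = gen_ideal su bu S (K_mod su bu Gr \<sigma>)
     in module.span su (cK \<union> \<Union>{I'. graded_ideal su bu Gr S I' \<and> cK \<subseteq> I' \<and>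
            I' \<subseteq> {a + b | a b. a \<in> cK \<and> b \<in> S \<inter> deg_ge su Gr 3}}))"

end

theory Submission
  imports Defs
begin

text \<open>
  Write L = S/I with I \<subseteq> S the preimage of J; this I is a graded ideal living in degrees \<ge> 2.
  Hence if x has degree \<le> -1 and [U_1, x] \<subseteq> I, then [U_1, x] = 0 for degree reasons, and
  x = 0 because U_{-p} embeds into Hom(U_1, U_{-p+1}).

  For x \<in> S of degree \<ge> 2 with [S_-, x] \<subseteq> I, treat the homogeneous components separately.
  The degree-2 component is annihilated by R_\<Theta>, so the \<gg>-module it generates is killed by \<Theta>;
  since \<sigma> = (1/2) ad \<Theta> on U_2 this module lies in ker \<sigma>, hence in K \<subseteq> I. A component of
  degree \<ge> 3 generates together with I, under S_{\<ge>0}, a graded ideal of S inside I + S_{3+},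
  which by the maximality of J is contained in I.

  That I lies in degrees \<ge> 2 rests on [R_\<Theta>, K] = 0: the ideal of S generated by K then stays
  inside the submodule generated by K under \<gg> and U_1.
\<close>

section \<open>Graded Lie superalgebras\<close>

lemma psign_zero [simp]: "psign n 0 = 0"
  by (simp add: psign_def)

locale graded_superalgebra =
  fixes su :: "'k::field \<Rightarrow> 'u::ab_group_add \<Rightarrow> 'u" and bu :: "'u \<Rightarrow> 'u \<Rightarrow> 'u"
    and Gr :: "int \<Rightarrow> 'u set"
  assumes graded_lie_superalgebra: "graded_lie_superalgebra su bu Gr"
begin

sublocale vector_space su
  using graded_lie_superalgebra unfolding graded_lie_superalgebra_def by blast

lemma subspace_Gr: "subspace (Gr k)"
  using graded_lie_superalgebra unfolding graded_lie_superalgebra_def by blast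

lemma bu_mem_Gr: "x \<in> Gr i \<Longrightarrow> y \<in> Gr j \<Longrightarrow> bu x y \<in> Gr (i + j)"
  using graded_lie_superalgebra unfolding graded_lie_superalgebra_def by blast

lemma bu_antisym: "x \<in> Gr i \<Longrightarrow> y \<in> Gr j \<Longrightarrow> bu x y = - psign (i * j) (bu y x)"
  using graded_lie_superalgebra unfolding graded_lie_superalgebra_def by blast

lemma jacobi:
  "x \<in> Gr i \<Longrightarrow> y \<in> Gr j \<Longrightarrow> bu x (bu y z) = bu (bu x y) z + psign (i * j) (bu y (bu x z))"
  using graded_lie_superalgebra unfolding graded_lie_superalgebra_def by blast

lemma homogeneous_decomposition:
  "\<exists>!c. finite {k. c k \<noteq> 0} \<and> (\<forall>k. c k \<in> Gr k) \<and> x = (\<Sum>k\<in>{k. c k \<noteq> 0}. c k)"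
  using graded_lie_superalgebra unfolding graded_lie_superalgebra_def by blast

lemma linear_bu_right: "Vector_Spaces.linear su su (bu x)"
  using graded_lie_superalgebra unfolding graded_lie_superalgebra_def bilin_def by blast

lemma linear_bu_left: "Vector_Spaces.linear su su (\<lambda>x. bu x y)"
  using graded_lie_superalgebra unfolding graded_lie_superalgebra_def bilin_def by blast

lemma bu_add_right: "bu x (a + b) = bu x a + bu x b"
  using linear_bu_right by (simp add: Vector_Spaces.linear_iff)

lemma bu_add_left: "bu (a + b) y = bu a y + bu b y"
  using linear_bu_left by (simp add: Vector_Spaces.linear_iff)

lemma bu_scale_right: "bu x (su c a) = su c (bu x a)"
  using linear_bu_right by (simp add: Vector_Spaces.linear_iff)

lemma bu_scale_left: "bu (su c a) y = su c (bu a y)"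
  using linear_bu_left by (simp add: Vector_Spaces.linear_iff)

lemma bu_zero_right [simp]: "bu x 0 = 0"
  using bu_add_right[of x 0 0] by simp

lemma bu_zero_left [simp]: "bu 0 y = 0"
  using bu_add_left[of 0 0 y] by simp

lemma bu_sum_right: "bu x (sum f A) = (\<Sum>a\<in>A. bu x (f a))"
  by (induction A rule: infinite_finite_induct) (auto simp: bu_add_right)

lemma psign_mem_subspace: "subspace W \<Longrightarrow> a \<in> W \<Longrightarrow> psign n a \<in> W"
  by (simp add: psign_def subspace_neg)

lemma bu_mem_span:
  assumes "a \<in> span A" "b \<in> span B"
  shows "bu a b \<in> span {bu x y | x y. x \<in> A \<and> y \<in> B}"
proof -
  have right: "bu x b \<in> span {bu x y | x y. x \<in> A \<and> y \<in> B}" if "x \<in> A" for x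
    using assms(2)
  proof (induction b rule: span_induct_alt)
    case (step c z w)
    then have "bu x z \<in> {bu x y | x y. x \<in> A \<and> y \<in> B}" using that by blast
    with step show ?case by (simp add: bu_add_right bu_scale_right span_add span_scale span_base)
  qed (simp add: span_zero)
  from assms(1) show ?thesis
    by (induction a rule: span_induct_alt)
      (auto simp: span_zero bu_add_left bu_scale_left intro!: span_add span_scale right)
qed

lemma subspace_bu_left_into: "subspace Z \<Longrightarrow> subspace {s. \<forall>y\<in>Y. bu s y \<in> Z}"
  unfolding subspace_def by (auto simp: bu_add_left bu_scale_left)

lemma subspace_bu_right_into: "subspace Z \<Longrightarrow> subspace {y. \<forall>s\<in>X. bu s y \<in> Z}"
  unfolding subspace_def by (auto simp: bu_add_right bu_scale_right)

lemma subspace_bu_preimage: "subspace Z \<Longrightarrow> subspace {y. bu s y \<in> Z}"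
  using subspace_bu_right_into[of Z "{s}"] by simp

section \<open>Homogeneous components\<close>

definition hcomp :: "'u \<Rightarrow> int \<Rightarrow> 'u" where
  "hcomp x = (THE c. finite {k. c k \<noteq> 0} \<and> (\<forall>k. c k \<in> Gr k) \<and> x = (\<Sum>k\<in>{k. c k \<noteq> 0}. c k))"

lemma hcomp_spec:
  "finite {k. hcomp x k \<noteq> 0} \<and> (\<forall>k. hcomp x k \<in> Gr k) \<and> x = (\<Sum>k\<in>{k. hcomp x k \<noteq> 0}. hcomp x k)"
  unfolding hcomp_def by (rule theI'[OF homogeneous_decomposition])

lemma finite_hcomp_support: "finite {k. hcomp x k \<noteq> 0}"
  using hcomp_spec by blast

lemma hcomp_mem_Gr: "hcomp x k \<in> Gr k"
  using hcomp_spec by blast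

lemma sum_hcomp:
  assumes "finite F" "{k. hcomp x k \<noteq> 0} \<subseteq> F"
  shows "(\<Sum>k\<in>F. hcomp x k) = x"
proof -
  have "(\<Sum>k\<in>F. hcomp x k) = (\<Sum>k\<in>{k. hcomp x k \<noteq> 0}. hcomp x k)"
    by (rule sum.mono_neutral_right[OF assms]) auto
  with hcomp_spec show ?thesis by metis
qed

lemma hcomp_eqI:
  assumes "finite F" "{k. c k \<noteq> 0} \<subseteq> F" "\<And>k. c k \<in> Gr k" "x = (\<Sum>k\<in>F. c k)"
  shows "hcomp x = c"
proof -
  have "finite {k. c k \<noteq> 0}"
    using assms(1,2) finite_subset by blast
  moreover have "(\<Sum>k\<in>F. c k) = (\<Sum>k\<in>{k. c k \<noteq> 0}. c k)"
    by (rule sum.mono_neutral_right[OF assms(1,2)]) auto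
  ultimately show ?thesis
    unfolding hcomp_def using assms(3,4) by (intro the1_equality[OF homogeneous_decomposition]) auto
qed

lemma hcomp_add: "hcomp (x + y) k = hcomp x k + hcomp y k"
proof -
  let ?F = "{k. hcomp x k \<noteq> 0} \<union> {k. hcomp y k \<noteq> 0}"
  have "hcomp (x + y) = (\<lambda>k. hcomp x k + hcomp y k)"
  proof (rule hcomp_eqI[where F = ?F])
    show "finite ?F" using finite_hcomp_support by blast
    show "hcomp x k + hcomp y k \<in> Gr k" for k
      using hcomp_mem_Gr subspace_Gr subspace_add by blast
    show "x + y = (\<Sum>k\<in>?F. hcomp x k + hcomp y k)"
      using finite_hcomp_support by (simp add: sum.distrib sum_hcomp)
  qed auto
  then show ?thesis by simp
qed

lemma hcomp_scale: "hcomp (su a x) k = su a (hcomp x k)"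
proof -
  let ?F = "{k. hcomp x k \<noteq> 0}"
  have "hcomp (su a x) = (\<lambda>k. su a (hcomp x k))"
  proof (rule hcomp_eqI[where F = ?F])
    show "su a (hcomp x k) \<in> Gr k" for k
      using hcomp_mem_Gr subspace_Gr subspace_scale by blast
    show "su a x = (\<Sum>k\<in>?F. su a (hcomp x k))"
      using finite_hcomp_support by (simp add: scale_sum_right[symmetric] sum_hcomp)
  qed (auto simp: finite_hcomp_support)
  then show ?thesis by simp
qed

lemma hcomp_homogeneous: "x \<in> Gr j \<Longrightarrow> hcomp x k = (if k = j then x else 0)"
  by (rule fun_cong[OF hcomp_eqI[where F = "{j}"]]) (auto simp: subspace_0[OF subspace_Gr])

lemma hcomp_zero [simp]: "hcomp 0 k = 0"
  using hcomp_homogeneous[OF subspace_0[OF subspace_Gr]] by simp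

lemma hcomp_bu_homogeneous: "y \<in> Gr j \<Longrightarrow> hcomp (bu y x) k = bu y (hcomp x (k - j))"
proof -
  assume y: "y \<in> Gr j"
  let ?S = "{k. hcomp x k \<noteq> 0}"
  have "hcomp (bu y x) = (\<lambda>k. bu y (hcomp x (k - j)))"
  proof (rule hcomp_eqI[where F = "(\<lambda>k. k + j) ` ?S"])
    show "finite ((\<lambda>k. k + j) ` ?S)"
      using finite_hcomp_support by blast
    show "{k. bu y (hcomp x (k - j)) \<noteq> 0} \<subseteq> (\<lambda>k. k + j) ` ?S"
    proof
      fix k assume "k \<in> {k. bu y (hcomp x (k - j)) \<noteq> 0}"
      then have "k - j \<in> ?S" by auto
      then show "k \<in> (\<lambda>k. k + j) ` ?S" by (rule rev_image_eqI) simp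
    qed
    show "bu y (hcomp x (k - j)) \<in> Gr k" for k
      using bu_mem_Gr[OF y hcomp_mem_Gr[of x "k - j"]] by simp
    have "(\<Sum>k\<in>(\<lambda>k. k + j) ` ?S. bu y (hcomp x (k - j))) = bu y (\<Sum>k\<in>?S. hcomp x k)"
      by (simp add: sum.reindex inj_on_def bu_sum_right)
    then show "bu y x = (\<Sum>k\<in>(\<lambda>k. k + j) ` ?S. bu y (hcomp x (k - j)))"
      using finite_hcomp_support by (simp add: sum_hcomp)
  qed
  then show ?thesis by simp
qed

lemma hcomp_mem_span: "x \<in> span A \<Longrightarrow> hcomp x k \<in> span ((\<lambda>a. hcomp a k) ` A)"
proof (induction x rule: span_induct_alt)
  case (step c x y)
  then have "hcomp x k \<in> (\<lambda>a. hcomp a k) ` A" by blast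
  then have "su c (hcomp x k) + hcomp y k \<in> span ((\<lambda>a. hcomp a k) ` A)"
    by (rule span_add[OF span_scale[OF span_base] step.IH])
  then show ?case by (simp add: hcomp_add hcomp_scale)
qed (simp add: span_zero)

lemma mem_subspace_if_hcomp:
  "subspace X \<Longrightarrow> (\<And>k. hcomp x k \<in> X) \<Longrightarrow> x \<in> X"
  using subspace_sum[of X "{k. hcomp x k \<noteq> 0}" "hcomp x"] finite_hcomp_support sum_hcomp by auto

lemma hcomp_mem_graded_subspace:
  assumes "subspace X" "graded_set su Gr X" "x \<in> X"
  shows "hcomp x k \<in> X"
proof -
  have "hcomp x k \<in> span ((\<lambda>a. hcomp a k) ` (\<Union>j. X \<inter> Gr j))"
    using hcomp_mem_span assms(2,3) unfolding graded_set_def by blast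
  also have "\<dots> \<subseteq> X"
    using assms(1) by (intro span_minimal) (auto simp: hcomp_homogeneous subspace_0)
  finally show ?thesis .
qed

lemma deg_ge_iff: "x \<in> deg_ge su Gr n \<longleftrightarrow> (\<forall>k<n. hcomp x k = 0)"
proof
  assume x: "x \<in> deg_ge su Gr n"
  show "\<forall>k<n. hcomp x k = 0"
  proof (intro allI impI)
    fix k assume "k < n"
    have "hcomp x k \<in> span ((\<lambda>a. hcomp a k) ` (\<Union>k\<in>{n..}. Gr k))"
      using hcomp_mem_span x by (simp add: deg_ge_def)
    also have "\<dots> \<subseteq> {0}"
      using \<open>k < n\<close> by (intro span_minimal) (auto simp: hcomp_homogeneous)
    finally show "hcomp x k = 0" by simp
  qed
next
  assume "\<forall>k<n. hcomp x k = 0"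
  then have "hcomp x k \<in> span (\<Union>k\<in>{n..}. Gr k)" for k
  proof (cases "k < n")
    case False
    then have "hcomp x k \<in> (\<Union>k\<in>{n..}. Gr k)" using hcomp_mem_Gr[of x k] by auto
    then show ?thesis by (rule span_base)
  qed (simp add: span_zero)
  then show "x \<in> deg_ge su Gr n"
    unfolding deg_ge_def by (rule mem_subspace_if_hcomp[OF subspace_span])
qed

lemma deg_le_iff: "x \<in> deg_le su Gr n \<longleftrightarrow> (\<forall>k>n. hcomp x k = 0)"
proof
  assume x: "x \<in> deg_le su Gr n"
  show "\<forall>k>n. hcomp x k = 0"
  proof (intro allI impI)
    fix k assume "k > n"
    have "hcomp x k \<in> span ((\<lambda>a. hcomp a k) ` (\<Union>k\<in>{..n}. Gr k))"
      using hcomp_mem_span x by (simp add: deg_le_def)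
    also have "\<dots> \<subseteq> {0}"
      using \<open>k > n\<close> by (intro span_minimal) (auto simp: hcomp_homogeneous)
    finally show "hcomp x k = 0" by simp
  qed
next
  assume "\<forall>k>n. hcomp x k = 0"
  then have "hcomp x k \<in> span (\<Union>k\<in>{..n}. Gr k)" for k
  proof (cases "k > n")
    case False
    then have "hcomp x k \<in> (\<Union>k\<in>{..n}. Gr k)" using hcomp_mem_Gr[of x k] by auto
    then show ?thesis by (rule span_base)
  qed (simp add: span_zero)
  then show "x \<in> deg_le su Gr n"
    unfolding deg_le_def by (rule mem_subspace_if_hcomp[OF subspace_span])
qed

lemma Gr_subset_deg_ge: "n \<le> k \<Longrightarrow> Gr k \<subseteq> deg_ge su Gr n"
  unfolding deg_ge_def by (auto intro: span_base)

lemma Gr_subset_deg_le: "k \<le> n \<Longrightarrow> Gr k \<subseteq> deg_le su Gr n"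
  unfolding deg_le_def by (auto intro: span_base)

lemma subspace_deg_ge: "subspace (deg_ge su Gr n)"
  unfolding deg_ge_def by simp

lemma deg_ge_antimono: "m \<le> n \<Longrightarrow> deg_ge su Gr n \<subseteq> deg_ge su Gr m"
  by (auto simp: deg_ge_iff)

lemma deg_le_mono: "m \<le> n \<Longrightarrow> deg_le su Gr m \<subseteq> deg_le su Gr n"
  by (auto simp: deg_le_iff)

lemma bu_mem_deg_ge:
  assumes "a \<in> deg_ge su Gr m" "b \<in> deg_ge su Gr n"
  shows "bu a b \<in> deg_ge su Gr (m + n)"
proof -
  have "bu a b \<in> span {bu x y | x y. x \<in> (\<Union>k\<in>{m..}. Gr k) \<and> y \<in> (\<Union>k\<in>{n..}. Gr k)}"
    using bu_mem_span assms unfolding deg_ge_def by blast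
  also have "\<dots> \<subseteq> deg_ge su Gr (m + n)"
  proof (rule span_minimal[OF _ subspace_deg_ge], rule subsetI)
    fix z assume "z \<in> {bu x y | x y. x \<in> (\<Union>k\<in>{m..}. Gr k) \<and> y \<in> (\<Union>k\<in>{n..}. Gr k)}"
    then obtain x y i j where "z = bu x y" "x \<in> Gr i" "y \<in> Gr j" "m \<le> i" "n \<le> j"
      by auto
    then show "z \<in> deg_ge su Gr (m + n)"
      using bu_mem_Gr Gr_subset_deg_ge[of "m + n" "i + j"] by auto
  qed
  finally show ?thesis .
qed

section \<open>Generated subalgebras and submodules\<close>

lemma subspace_gen_subalg: "subspace (gen_subalg su bu X)"
  unfolding gen_subalg_def by (rule subspace_Inter) auto

lemma gen_subalg_superset: "X \<subseteq> gen_subalg su bu X"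
  unfolding gen_subalg_def by blast

lemma bu_mem_gen_subalg:
  "a \<in> gen_subalg su bu X \<Longrightarrow> b \<in> gen_subalg su bu X \<Longrightarrow> bu a b \<in> gen_subalg su bu X"
  unfolding gen_subalg_def by blast

lemma gen_subalg_minimal:
  "subspace W \<Longrightarrow> X \<subseteq> W \<Longrightarrow> (\<forall>a\<in>W. \<forall>b\<in>W. bu a b \<in> W) \<Longrightarrow> gen_subalg su bu X \<subseteq> W"
  unfolding gen_subalg_def by blast

lemma subspace_gen_ideal: "subspace (gen_ideal su bu T X)"
  unfolding gen_ideal_def by (rule subspace_Inter) auto

lemma gen_ideal_superset: "X \<subseteq> gen_ideal su bu T X"
  unfolding gen_ideal_def by blast

lemma bu_mem_gen_ideal: "t \<in> T \<Longrightarrow> a \<in> gen_ideal su bu T X \<Longrightarrow> bu t a \<in> gen_ideal su bu T X"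
  unfolding gen_ideal_def by blast

lemma gen_ideal_minimal:
  "subspace W \<Longrightarrow> X \<subseteq> W \<Longrightarrow> (\<forall>t\<in>T. \<forall>a\<in>W. bu t a \<in> W) \<Longrightarrow> gen_ideal su bu T X \<subseteq> W"
  unfolding gen_ideal_def by blast

text \<open>Needed because the Jacobi identity and antisymmetry are only available for homogeneous
  elements.\<close>

lemma gen_subalg_minimal_homogeneous:
  assumes X: "X \<subseteq> (\<Union>k. Gr k)" "X \<subseteq> W" and W: "subspace W"
    and closed: "\<And>i j x y. x \<in> Gr i \<Longrightarrow> y \<in> Gr j \<Longrightarrow> x \<in> W \<Longrightarrow> y \<in> W \<Longrightarrow> bu x y \<in> W"
  shows "gen_subalg su bu X \<subseteq> W"
proof -
  let ?H = "\<Union>k. W \<inter> Gr k"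
  have "gen_subalg su bu X \<subseteq> span ?H"
  proof (rule gen_subalg_minimal[OF subspace_span])
    show "X \<subseteq> span ?H"
      using X by (blast intro: span_base)
    show "\<forall>a\<in>span ?H. \<forall>b\<in>span ?H. bu a b \<in> span ?H"
    proof (intro ballI)
      fix a b assume "a \<in> span ?H" "b \<in> span ?H"
      then have "bu a b \<in> span {bu x y | x y. x \<in> ?H \<and> y \<in> ?H}"
        by (rule bu_mem_span)
      also have "\<dots> \<subseteq> span ?H"
        by (rule span_mono) (blast intro: closed bu_mem_Gr)
      finally show "bu a b \<in> span ?H" .
    qed
  qed
  also have "\<dots> \<subseteq> W"
    by (rule span_minimal[OF _ W]) blast
  finally show ?thesis .
qed

lemma graded_gen_subalg:
  assumes "X \<subseteq> (\<Union>k. Gr k)"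
  shows "graded_set su Gr (gen_subalg su bu X)"
proof -
  let ?A = "gen_subalg su bu X"
  have "?A \<subseteq> ?A \<inter> span (\<Union>k. ?A \<inter> Gr k)"
  proof (rule gen_subalg_minimal_homogeneous[OF assms])
    show "X \<subseteq> ?A \<inter> span (\<Union>k. ?A \<inter> Gr k)"
    proof
      fix x assume "x \<in> X"
      then obtain k where "x \<in> ?A \<inter> Gr k"
        using assms gen_subalg_superset by blast
      then show "x \<in> ?A \<inter> span (\<Union>k. ?A \<inter> Gr k)"
        by (blast intro: span_base)
    qed
    show "subspace (?A \<inter> span (\<Union>k. ?A \<inter> Gr k))"
      by (simp add: subspace_gen_subalg subspace_inter)
    fix i j x y assume "x \<in> Gr i" "y \<in> Gr j"
      and "x \<in> ?A \<inter> span (\<Union>k. ?A \<inter> Gr k)" "y \<in> ?A \<inter> span (\<Union>k. ?A \<inter> Gr k)"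
    then have "bu x y \<in> ?A \<inter> Gr (i + j)"
      by (simp add: bu_mem_gen_subalg bu_mem_Gr)
    then show "bu x y \<in> ?A \<inter> span (\<Union>k. ?A \<inter> Gr k)"
      by (blast intro: span_base)
  qed
  then show ?thesis
    unfolding graded_set_def by blast
qed

lemma bu_stable_gen_subalg:
  assumes Z: "subspace Z" and X: "X \<subseteq> (\<Union>k. Gr k)" "\<forall>x\<in>X. \<forall>z\<in>Z. bu x z \<in> Z"
    and s: "s \<in> gen_subalg su bu X" and z: "z \<in> Z"
  shows "bu s z \<in> Z"
proof -
  have "gen_subalg su bu X \<subseteq> {s. \<forall>w\<in>Z. bu s w \<in> Z}"
  proof (rule gen_subalg_minimal_homogeneous[OF X(1) _ subspace_bu_left_into[OF Z]])
    show "X \<subseteq> {s. \<forall>w\<in>Z. bu s w \<in> Z}"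
      using X(2) by blast
    fix i j x y assume x: "x \<in> Gr i" and y: "y \<in> Gr j"
      and "x \<in> {s. \<forall>w\<in>Z. bu s w \<in> Z}" "y \<in> {s. \<forall>w\<in>Z. bu s w \<in> Z}"
    then have "bu x (bu y w) - psign (i * j) (bu y (bu x w)) \<in> Z" if "w \<in> Z" for w
      using that Z by (simp add: subspace_diff psign_mem_subspace)
    then show "bu x y \<in> {s. \<forall>w\<in>Z. bu s w \<in> Z}"
      by (simp add: jacobi[OF x y])
  qed
  then show ?thesis
    using s z by blast
qed

lemma graded_span_Union:
  assumes "\<And>A. A \<in> \<A> \<Longrightarrow> graded_set su Gr A"
  shows "graded_set su Gr (span (\<Union>\<A>))"
proof -
  have "\<Union>\<A> \<subseteq> span (\<Union>k. span (\<Union>\<A>) \<inter> Gr k)"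
  proof
    fix x assume "x \<in> \<Union>\<A>"
    then obtain A where "A \<in> \<A>" "x \<in> A" by blast
    then have "x \<in> span (\<Union>k. A \<inter> Gr k)"
      using assms unfolding graded_set_def by blast
    also have "\<dots> \<subseteq> span (\<Union>k. span (\<Union>\<A>) \<inter> Gr k)"
      using \<open>A \<in> \<A>\<close> by (intro span_mono) (blast intro: span_base)
    finally show "x \<in> span (\<Union>k. span (\<Union>\<A>) \<inter> Gr k)" .
  qed
  then show ?thesis
    unfolding graded_set_def by (rule span_minimal[OF _ subspace_span])
qed

lemma graded_gen_ideal:
  assumes T: "graded_set su Gr T" and X: "graded_set su Gr X"
  shows "graded_set su Gr (gen_ideal su bu T X)"
proof -
  let ?M = "gen_ideal su bu T X"
  let ?H = "\<Union>k. ?M \<inter> Gr k"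
  have "?M \<subseteq> span ?H"
  proof (rule gen_ideal_minimal[OF subspace_span])
    show "X \<subseteq> span ?H"
      using X gen_ideal_superset[of X T] span_mono[of "\<Union>k. X \<inter> Gr k" ?H]
      unfolding graded_set_def by blast
    show "\<forall>t\<in>T. \<forall>a\<in>span ?H. bu t a \<in> span ?H"
    proof (intro ballI)
      fix t a assume "t \<in> T" "a \<in> span ?H"
      then have "bu t a \<in> span {bu x y | x y. x \<in> (\<Union>k. T \<inter> Gr k) \<and> y \<in> ?H}"
        using T bu_mem_span unfolding graded_set_def by blast
      also have "\<dots> \<subseteq> span ?H"
        by (rule span_mono) (blast intro: bu_mem_gen_ideal bu_mem_Gr)
      finally show "bu t a \<in> span ?H" .
    qed
  qed
  then show ?thesis
    unfolding graded_set_def .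
qed

lemma bu_stable_gen_ideal:
  assumes hom: "Y \<subseteq> (\<Union>k. Gr k)" "T \<subseteq> (\<Union>k. Gr k)"
    and gens: "\<And>y x. y \<in> Y \<Longrightarrow> x \<in> X \<Longrightarrow> bu y x \<in> gen_ideal su bu T X"
    and commutators: "\<And>y t. y \<in> Y \<Longrightarrow> t \<in> T \<Longrightarrow> bu y t \<in> Y \<union> T"
    and y: "y \<in> Y" and w: "w \<in> gen_ideal su bu T X"
  shows "bu y w \<in> gen_ideal su bu T X"
proof -
  let ?M = "gen_ideal su bu T X"
  have "?M \<subseteq> ?M \<inter> {w. \<forall>y\<in>Y. bu y w \<in> ?M}"
  proof (rule gen_ideal_minimal)
    show "subspace (?M \<inter> {w. \<forall>y\<in>Y. bu y w \<in> ?M})"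
      by (intro subspace_inter subspace_gen_ideal subspace_bu_right_into)
    show "X \<subseteq> ?M \<inter> {w. \<forall>y\<in>Y. bu y w \<in> ?M}"
      using gens gen_ideal_superset by blast
    show "\<forall>t\<in>T. \<forall>w\<in>?M \<inter> {w. \<forall>y\<in>Y. bu y w \<in> ?M}. bu t w \<in> ?M \<inter> {w. \<forall>y\<in>Y. bu y w \<in> ?M}"
    proof (intro ballI)
      fix t w assume t: "t \<in> T" and w: "w \<in> ?M \<inter> {w. \<forall>y\<in>Y. bu y w \<in> ?M}"
      have "bu y (bu t w) \<in> ?M" if y: "y \<in> Y" for y
      proof -
        obtain i j where "y \<in> Gr i" "t \<in> Gr j"
          using hom y t by blast
        then have "bu y (bu t w) = bu (bu y t) w + psign (i * j) (bu t (bu y w))"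
          by (rule jacobi)
        moreover have "bu (bu y t) w \<in> ?M"
          using commutators[OF y t] w bu_mem_gen_ideal by blast
        moreover have "bu t (bu y w) \<in> ?M"
          using w y t bu_mem_gen_ideal by blast
        ultimately show ?thesis
          by (simp add: subspace_add[OF subspace_gen_ideal] psign_mem_subspace[OF subspace_gen_ideal])
      qed
      then show "bu t w \<in> ?M \<inter> {w. \<forall>y\<in>Y. bu y w \<in> ?M}"
        using w t bu_mem_gen_ideal by blast
    qed
  qed
  then show ?thesis
    using y w by blast
qed

lemma gen_ideal_annihilated:
  assumes hom: "Y \<subseteq> (\<Union>k. Gr k)" "T \<subseteq> (\<Union>k. Gr k)"
    and gens: "\<And>y x. y \<in> Y \<Longrightarrow> x \<in> X \<Longrightarrow> bu y x = 0"
    and commutators: "\<And>y t. y \<in> Y \<Longrightarrow> t \<in> T \<Longrightarrow> bu y t \<in> Y"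
    and y: "y \<in> Y" and w: "w \<in> gen_ideal su bu T X"
  shows "bu y w = 0"
proof -
  have "gen_ideal su bu T X \<subseteq> {w. \<forall>y\<in>Y. bu y w \<in> {0}}"
  proof (rule gen_ideal_minimal[OF subspace_bu_right_into])
    show "X \<subseteq> {w. \<forall>y\<in>Y. bu y w \<in> {0}}"
      using gens by blast
    show "\<forall>t\<in>T. \<forall>w\<in>{w. \<forall>y\<in>Y. bu y w \<in> {0}}. bu t w \<in> {w. \<forall>y\<in>Y. bu y w \<in> {0}}"
    proof (intro ballI)
      fix t w assume t: "t \<in> T" and w: "w \<in> {w. \<forall>y\<in>Y. bu y w \<in> {0}}"
      have "bu y (bu t w) = 0" if y: "y \<in> Y" for y
      proof -
        obtain i j where "y \<in> Gr i" "t \<in> Gr j"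
          using hom y t by blast
        then have "bu y (bu t w) = bu (bu y t) w + psign (i * j) (bu t (bu y w))"
          by (rule jacobi)
        with commutators[OF y t] w y show ?thesis
          by simp
      qed
      then show "bu t w \<in> {w. \<forall>y\<in>Y. bu y w \<in> {0}}"
        by blast
    qed
  qed simp
  then show ?thesis
    using y w by blast
qed

lemma homogeneous_deg_ge_zero: "x \<in> Gr i \<Longrightarrow> x \<in> deg_ge su Gr n \<Longrightarrow> i < n \<Longrightarrow> x = 0"
  using hcomp_homogeneous[of x i i] by (simp add: deg_ge_iff)

lemma gen_subalg_Gr1_subset:
  "gen_subalg su bu (Gr 1) \<subseteq> span (Gr 1 \<union> {bu u v | u v. u \<in> Gr 1 \<and> v \<in> Gr 1} \<union> deg_ge su Gr 3)"
  (is "_ \<subseteq> span (Gr 1 \<union> ?P \<union> _)")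
proof (rule gen_subalg_minimal_homogeneous[OF _ _ subspace_span])
  let ?W = "span (Gr 1 \<union> ?P \<union> deg_ge su Gr 3)"
  have "Gr 1 \<union> ?P \<union> deg_ge su Gr 3 \<subseteq> deg_ge su Gr 1"
    using bu_mem_Gr[of _ 1 _ 1] Gr_subset_deg_ge[of 1 1] Gr_subset_deg_ge[of 1 2] deg_ge_antimono[of 1 3]
    by fastforce
  then have W_deg: "?W \<subseteq> deg_ge su Gr 1"
    by (rule span_minimal[OF _ subspace_deg_ge])
  show "Gr 1 \<subseteq> (\<Union>k. Gr k)" "Gr 1 \<subseteq> ?W"
    by (auto intro: span_base)
  fix i j a b assume a: "a \<in> Gr i" "a \<in> ?W" and b: "b \<in> Gr j" "b \<in> ?W"
  show "bu a b \<in> ?W"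
  proof (cases "a = 0 \<or> b = 0")
    case True
    then show ?thesis by (auto simp: span_zero)
  next
    case False
    then have "\<not> i < 1" "\<not> j < 1"
      using a b W_deg homogeneous_deg_ge_zero by blast+
    then have "i = 1 \<and> j = 1 \<or> 3 \<le> i + j"
      by linarith
    then show ?thesis
    proof
      assume "i = 1 \<and> j = 1"
      then have "bu a b \<in> ?P" using a b by blast
      then show ?thesis by (blast intro: span_base)
    next
      assume "3 \<le> i + j"
      then have "bu a b \<in> deg_ge su Gr 3"
        using bu_mem_Gr[OF a(1) b(1)] Gr_subset_deg_ge by blast
      then show ?thesis by (blast intro: span_base)
    qed
  qed
qed

lemma Gr2_subset_span_brackets:
  assumes generated: "deg_ge su Gr 1 \<subseteq> gen_subalg su bu (Gr 1)"
  shows "Gr 2 \<subseteq> span {bu u v | u v. u \<in> Gr 1 \<and> v \<in> Gr 1}"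
proof
  fix x assume x: "x \<in> Gr 2"
  let ?P = "{bu u v | u v. u \<in> Gr 1 \<and> v \<in> Gr 1}"
  have "x \<in> span (Gr 1 \<union> ?P \<union> deg_ge su Gr 3)"
    using x Gr_subset_deg_ge[of 1 2] generated gen_subalg_Gr1_subset by auto
  then have "hcomp x 2 \<in> span ((\<lambda>a. hcomp a 2) ` (Gr 1 \<union> ?P \<union> deg_ge su Gr 3))"
    by (rule hcomp_mem_span)
  moreover have "hcomp a 2 \<in> insert 0 ?P" if "a \<in> Gr 1 \<union> ?P \<union> deg_ge su Gr 3" for a
    using that
  proof (elim UnE)
    assume "a \<in> Gr 1"
    then show ?thesis using hcomp_homogeneous[of a 1 2] by simp
  next
    assume "a \<in> ?P"
    then show ?thesis using bu_mem_Gr[of _ 1 _ 1] hcomp_homogeneous[of a 2 2] by auto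
  next
    assume "a \<in> deg_ge su Gr 3"
    then show ?thesis by (simp add: deg_ge_iff)
  qed
  then have "span ((\<lambda>a. hcomp a 2) ` (Gr 1 \<union> ?P \<union> deg_ge su Gr 3)) \<subseteq> span (insert 0 ?P)"
    by (intro span_mono) blast
  ultimately show "x \<in> span ?P"
    using hcomp_homogeneous[OF x] by (auto simp: span_insert_0)
qed

lemma graded_insert_homogeneous: "graded_set su Gr X \<Longrightarrow> x \<in> Gr k \<Longrightarrow> graded_set su Gr (insert x X)"
  unfolding graded_set_def using span_mono[of "\<Union>k. X \<inter> Gr k" "\<Union>k. insert x X \<inter> Gr k"]
  by (blast intro: span_base)

lemma bu_stable_if_homogeneous:
  assumes S: "graded_set su Gr S" and Z: "subspace Z"
    and hom: "\<And>s k z. s \<in> S \<Longrightarrow> s \<in> Gr k \<Longrightarrow> z \<in> Z \<Longrightarrow> bu s z \<in> Z"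
    and s: "s \<in> S" and z: "z \<in> Z"
  shows "bu s z \<in> Z"
proof -
  have "span (\<Union>k. S \<inter> Gr k) \<subseteq> {s. \<forall>z\<in>Z. bu s z \<in> Z}"
    using hom by (intro span_minimal[OF _ subspace_bu_left_into[OF Z]]) blast
  with S s z show ?thesis
    unfolding graded_set_def by blast
qed

lemma bu_stable_gen_ideal_nonneg:
  fixes S X :: "'u set"
  defines "A \<equiv> gen_ideal su bu (S \<inter> (\<Union>j\<in>{0..}. Gr j)) X"
  assumes S_closed: "\<And>a b. a \<in> S \<Longrightarrow> b \<in> S \<Longrightarrow> bu a b \<in> S" and S_graded: "graded_set su Gr S"
    and neg: "\<And>y j z. j < 0 \<Longrightarrow> y \<in> S \<Longrightarrow> y \<in> Gr j \<Longrightarrow> z \<in> X \<Longrightarrow> bu y z \<in> A"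
    and s: "s \<in> S" and a: "a \<in> A"
  shows "bu s a \<in> A"
proof -
  let ?T = "S \<inter> (\<Union>j\<in>{0..}. Gr j)" and ?Y = "S \<inter> (\<Union>j\<in>{..<0}. Gr j)"
  have Y: "bu y b \<in> A" if "y \<in> ?Y" "b \<in> A" for y b
    using that unfolding A_def
  proof (rule bu_stable_gen_ideal[rotated 4])
    show "?Y \<subseteq> (\<Union>k. Gr k)" "?T \<subseteq> (\<Union>k. Gr k)"
      by blast+
    show "bu y z \<in> gen_ideal su bu ?T X" if "y \<in> ?Y" "z \<in> X" for y z
      using that neg unfolding A_def by blast
    show "bu y t \<in> ?Y \<union> ?T" if y: "y \<in> ?Y" and t: "t \<in> ?T" for y t
    proof -
      obtain i j where "y \<in> Gr i" "t \<in> Gr j"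
        using y t by blast
      then have "bu y t \<in> S \<inter> Gr (i + j)"
        using S_closed bu_mem_Gr y t by blast
      then show ?thesis
        by (cases "i + j < 0") auto
    qed
  qed
  show ?thesis
  proof (rule bu_stable_if_homogeneous[OF S_graded _ _ s a])
    fix s k b assume s: "s \<in> S" "s \<in> Gr k" and b: "b \<in> A"
    show "bu s b \<in> A"
    proof (cases "k < 0")
      case False
      with s have "s \<in> ?T"
        by auto
      then show ?thesis
        using b unfolding A_def by (rule bu_mem_gen_ideal)
    qed (use Y s b in blast)
  qed (simp add: A_def subspace_gen_ideal)
qed

end

section \<open>The ideal defining L(\<gg>,V,\<Theta>)\<close>

text \<open>The properties of U(\<gg>,V,\<Theta>) that the argument uses: U_{-p} \<rightarrow> Hom(U_1, U_{-p+1}) is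
  injective, U_+ is generated by U_1 (part of its freeness), and 2 is invertible, so that \<sigma>
  determines the action of \<Theta> on U_2.\<close>

locale theta_graded_superalgebra = graded_superalgebra +
  fixes th and \<sigma>
  assumes th_mem_Gr: "th \<in> Gr (-1)"
    and negative_transitive:
      "\<And>p x. 1 \<le> p \<Longrightarrow> x \<in> Gr (-p) \<Longrightarrow> (\<And>u. u \<in> Gr 1 \<Longrightarrow> bu x u = 0) \<Longrightarrow> x = 0"
    and positive_part_generated: "deg_ge su Gr 1 \<subseteq> gen_subalg su bu (Gr 1)"
    and sigma: "is_sigma su bu Gr th \<sigma>"
    and scale_half_cancel: "\<And>x. su (1/2) x = 0 \<Longrightarrow> x = 0"
begin

abbreviation "R \<equiv> R_Theta su bu Gr th"
abbreviation "S \<equiv> S_alg su bu Gr th"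
abbreviation "K \<equiv> K_mod su bu Gr \<sigma>"
abbreviation "cK \<equiv> gen_ideal su bu S K"
abbreviation "I \<equiv> L_ideal su bu Gr th \<sigma>"

lemma R_eq_gen_ideal: "R = gen_ideal su bu (Gr 0) {th}"
  by (simp add: R_Theta_def gen_ideal_def)

lemma R_subset_Gr: "R \<subseteq> Gr (-1)"
  unfolding R_eq_gen_ideal
  by (rule gen_ideal_minimal[OF subspace_Gr]) (use th_mem_Gr bu_mem_Gr[of _ 0 _ "-1"] in auto)

lemma bu_R_Gr0_mem_R:
  assumes r: "r \<in> R" and g: "g \<in> Gr 0"
  shows "bu r g \<in> R"
proof -
  have "bu r g = - bu g r"
    using bu_antisym[OF _ g, of r "-1"] r R_subset_Gr by (auto simp: psign_def)
  moreover have "bu g r \<in> R"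
    using r g unfolding R_eq_gen_ideal by (rule bu_mem_gen_ideal[rotated])
  ultimately show ?thesis
    unfolding R_eq_gen_ideal by (simp add: subspace_neg[OF subspace_gen_ideal])
qed

lemma S_eq_gen_subalg: "S = gen_subalg su bu (R \<union> Gr 0 \<union> Gr 1)"
  by (simp add: S_alg_def)

lemma S_generators_homogeneous: "R \<union> Gr 0 \<union> Gr 1 \<subseteq> (\<Union>k. Gr k)"
  using R_subset_Gr by blast

lemma subspace_S: "subspace S"
  by (simp add: S_eq_gen_subalg subspace_gen_subalg)

lemma bu_mem_S: "a \<in> S \<Longrightarrow> b \<in> S \<Longrightarrow> bu a b \<in> S"
  by (simp add: S_eq_gen_subalg bu_mem_gen_subalg)

lemma S_superset: "R \<union> Gr 0 \<union> Gr 1 \<subseteq> S"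
  unfolding S_eq_gen_subalg by (rule gen_subalg_superset)

lemma graded_S: "graded_set su Gr S"
  unfolding S_eq_gen_subalg by (rule graded_gen_subalg[OF S_generators_homogeneous])

lemma Gr2_subset_S: "Gr 2 \<subseteq> S"
proof -
  have "{bu u v | u v. u \<in> Gr 1 \<and> v \<in> Gr 1} \<subseteq> S"
    using S_superset bu_mem_S by blast
  then show ?thesis
    using Gr2_subset_span_brackets[OF positive_part_generated] span_minimal[OF _ subspace_S] by blast
qed

text \<open>By the Jacobi identity [\<Theta>,[u,v]] = [[\<Theta>,u],v] + [[\<Theta>,v],u], and the brackets [u,v]
  span U_2.\<close>

lemma sigma_eq: "w \<in> Gr 2 \<Longrightarrow> \<sigma> w = su (1/2) (bu th w)"
proof -
  have sigma_add: "\<sigma> (a + b) = \<sigma> a + \<sigma> b" if "a \<in> Gr 2" "b \<in> Gr 2" for a b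
    using sigma that unfolding is_sigma_def by blast
  have sigma_scale: "\<sigma> (su c a) = su c (\<sigma> a)" if "a \<in> Gr 2" for c a
    using sigma that unfolding is_sigma_def by blast
  have sigma_bracket: "\<sigma> (bu u v) = su (1/2) (bu th (bu u v))"
    if u: "u \<in> Gr 1" and v: "v \<in> Gr 1" for u v
  proof -
    have "bu th (bu u v) = bu (bu th u) v - bu u (bu th v)"
      using jacobi[OF th_mem_Gr u] by (simp add: psign_def)
    also have "bu u (bu th v) = - bu (bu th v) u"
      using bu_antisym[OF u bu_mem_Gr[OF th_mem_Gr v]] by (simp add: psign_def)
    finally have "bu th (bu u v) = bu (bu th u) v + bu (bu th v) u"
      by simp
    then show ?thesis
      using sigma u v unfolding is_sigma_def by simp
  qed
  assume "w \<in> Gr 2"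
  then have "w \<in> span {bu u v | u v. u \<in> Gr 1 \<and> v \<in> Gr 1}"
    using Gr2_subset_span_brackets[OF positive_part_generated] by blast
  then have "w \<in> Gr 2 \<and> \<sigma> w = su (1/2) (bu th w)"
  proof (induction w rule: span_induct_alt)
    case base
    show ?case
      using sigma_scale[of 0 0] subspace_0[OF subspace_Gr] by simp
  next
    case (step c x y)
    then have x: "x \<in> Gr 2" and "\<sigma> x = su (1/2) (bu th x)"
      using bu_mem_Gr[of _ 1 _ 1] sigma_bracket by auto
    moreover have "su c x \<in> Gr 2"
      using x subspace_Gr subspace_scale by blast
    ultimately show ?case
      using step.IH subspace_add[OF subspace_Gr]
      by (simp add: sigma_add sigma_scale bu_add_right bu_scale_right scale_right_distrib scale_left_commute)
  qed
  then show ?thesis by blast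
qed

lemma K_eq_span:
  "K = span (\<Union>{W. subspace W \<and> W \<subseteq> Gr 2 \<and> (\<forall>g\<in>Gr 0. \<forall>w\<in>W. bu g w \<in> W) \<and> (\<forall>w\<in>W. \<sigma> w = 0)})"
  by (simp add: K_mod_def)

lemma subspace_K: "subspace K"
  by (simp add: K_eq_span)

lemma K_minimal:
  assumes Z: "subspace Z"
    and "\<And>W. subspace W \<Longrightarrow> W \<subseteq> Gr 2 \<Longrightarrow> \<forall>g\<in>Gr 0. \<forall>w\<in>W. bu g w \<in> W \<Longrightarrow> \<forall>w\<in>W. \<sigma> w = 0
      \<Longrightarrow> W \<subseteq> Z"
  shows "K \<subseteq> Z"
  unfolding K_eq_span by (rule span_minimal[OF Union_least Z]) (use assms(2) in blast)

lemma K_superset: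
  assumes "subspace W" "W \<subseteq> Gr 2" "\<forall>g\<in>Gr 0. \<forall>w\<in>W. bu g w \<in> W" "\<forall>w\<in>W. \<sigma> w = 0"
  shows "W \<subseteq> K"
  unfolding K_eq_span by (rule subset_trans[OF Union_upper span_superset]) (use assms in blast)

lemma K_subset_Gr: "K \<subseteq> Gr 2"
  by (rule K_minimal[OF subspace_Gr])

lemma bu_Gr0_K_mem_K:
  assumes g: "g \<in> Gr 0" and k: "k \<in> K"
  shows "bu g k \<in> K"
proof -
  have "K \<subseteq> {k. bu g k \<in> K}"
  proof (rule K_minimal[OF subspace_bu_preimage[OF subspace_K]])
    fix W assume W: "subspace W" "W \<subseteq> Gr 2" "\<forall>g\<in>Gr 0. \<forall>w\<in>W. bu g w \<in> W" "\<forall>w\<in>W. \<sigma> w = 0"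
    then have "W \<subseteq> K"
      by (rule K_superset)
    with g W(3) show "W \<subseteq> {k. bu g k \<in> K}"
      by blast
  qed
  with k show ?thesis
    by blast
qed

lemma bu_th_K: "k \<in> K \<Longrightarrow> bu th k = 0"
proof -
  have "K \<subseteq> {k. bu th k \<in> {0}}"
  proof (rule K_minimal[OF subspace_bu_preimage[OF subspace_single_0]])
    fix W assume W: "W \<subseteq> Gr 2" "\<forall>w\<in>W. \<sigma> w = 0"
    have "bu th w = 0" if "w \<in> W" for w
    proof (rule scale_half_cancel)
      show "su (1/2) (bu th w) = 0"
        using W that sigma_eq[of w] by auto
    qed
    then show "W \<subseteq> {k. bu th k \<in> {0}}"
      by blast
  qed
  then show "k \<in> K \<Longrightarrow> bu th k = 0"
    by blast
qed

lemma K_maximal: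
  assumes "subspace W" "W \<subseteq> Gr 2" "\<And>g w. g \<in> Gr 0 \<Longrightarrow> w \<in> W \<Longrightarrow> bu g w \<in> W"
    and "\<And>w. w \<in> W \<Longrightarrow> bu th w = 0"
  shows "W \<subseteq> K"
  using assms sigma_eq by (intro K_superset) auto

lemma bu_R_K: "r \<in> R \<Longrightarrow> k \<in> K \<Longrightarrow> bu r k = 0"
proof -
  assume r: "r \<in> R" and k: "k \<in> K"
  have "bu k r = 0"
  proof (rule gen_ideal_annihilated[where Y = K and T = "Gr 0" and X = "{th}"])
    show "K \<subseteq> (\<Union>k. Gr k)" "Gr 0 \<subseteq> (\<Union>k. Gr k)"
      using K_subset_Gr by blast+
    show "bu k x = 0" if "k \<in> K" "x \<in> {th}" for k x
      using bu_antisym[OF _ th_mem_Gr, of k 2] bu_th_K that K_subset_Gr by auto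
    show "bu k g \<in> K" if "k \<in> K" "g \<in> Gr 0" for k g
      using bu_antisym[OF _ that(2), of k 2] that K_subset_Gr bu_Gr0_K_mem_K
      by (auto simp: psign_def subspace_neg[OF subspace_K])
    show "k \<in> K" "r \<in> gen_ideal su bu (Gr 0) {th}"
      using r k R_eq_gen_ideal by simp_all
  qed
  then show "bu r k = 0"
    using bu_antisym[of r "-1" k 2] r k R_subset_Gr K_subset_Gr by auto
qed

lemma cK_subset_deg_ge: "cK \<subseteq> deg_ge su Gr 2"
proof -
  let ?Z = "gen_ideal su bu (Gr 0 \<union> Gr 1) K"
  have Z_deg: "?Z \<subseteq> deg_ge su Gr 2"
  proof (rule gen_ideal_minimal[OF subspace_deg_ge])
    show "K \<subseteq> deg_ge su Gr 2"
      using K_subset_Gr Gr_subset_deg_ge[of 2 2] by auto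
    show "\<forall>t\<in>Gr 0 \<union> Gr 1. \<forall>a\<in>deg_ge su Gr 2. bu t a \<in> deg_ge su Gr 2"
    proof (intro ballI)
      fix t a assume "t \<in> Gr 0 \<union> Gr 1" and a: "a \<in> deg_ge su Gr 2"
      then have "t \<in> deg_ge su Gr 0"
        using Gr_subset_deg_ge[of 0 0] Gr_subset_deg_ge[of 0 1] by auto
      from bu_mem_deg_ge[OF this a] show "bu t a \<in> deg_ge su Gr 2"
        by simp
    qed
  qed
  have R_Z: "bu r z \<in> ?Z" if "r \<in> R" "z \<in> ?Z" for r z
  proof (rule bu_stable_gen_ideal[where Y = R, OF _ _ _ _ that])
    show "R \<subseteq> (\<Union>k. Gr k)" "Gr 0 \<union> Gr 1 \<subseteq> (\<Union>k. Gr k)"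
      using R_subset_Gr by blast+
    show "bu r k \<in> ?Z" if "r \<in> R" "k \<in> K" for r k
      using bu_R_K[OF that] subspace_0[OF subspace_gen_ideal] by simp
    show "bu r t \<in> R \<union> (Gr 0 \<union> Gr 1)" if "r \<in> R" "t \<in> Gr 0 \<union> Gr 1" for r t
      using that bu_R_Gr0_mem_R bu_mem_Gr[of r "-1" t 1] R_subset_Gr by auto
  qed
  have "\<forall>x\<in>R \<union> Gr 0 \<union> Gr 1. \<forall>z\<in>?Z. bu x z \<in> ?Z"
    using R_Z bu_mem_gen_ideal by blast
  then have S_Z: "\<forall>s\<in>S. \<forall>z\<in>?Z. bu s z \<in> ?Z"
    unfolding S_eq_gen_subalg
    using bu_stable_gen_subalg[OF subspace_gen_ideal S_generators_homogeneous] by blast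
  have "cK \<subseteq> ?Z"
    by (rule gen_ideal_minimal[OF subspace_gen_ideal gen_ideal_superset S_Z])
  with Z_deg show ?thesis
    by blast
qed

lemma cK_subset_S: "cK \<subseteq> S"
  using K_subset_Gr Gr2_subset_S bu_mem_S by (intro gen_ideal_minimal[OF subspace_S]) auto

lemma graded_cK: "graded_set su Gr cK"
proof (rule graded_gen_ideal[OF graded_S])
  show "graded_set su Gr K"
    using K_subset_Gr unfolding graded_set_def by (blast intro: span_base)
qed

lemma L_ideal_eq:
  "I = span (cK \<union> \<Union>{A. graded_ideal su bu Gr S A \<and> cK \<subseteq> A \<and> A \<subseteq> span (cK \<union> (S \<inter> deg_ge su Gr 3))})"
proof -
  have "span (S \<inter> deg_ge su Gr 3) = S \<inter> deg_ge su Gr 3" "span cK = cK"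
    by (simp_all add: subspace_inter subspace_S subspace_deg_ge subspace_gen_ideal)
  then have "span (cK \<union> (S \<inter> deg_ge su Gr 3)) = {a + b | a b. a \<in> cK \<and> b \<in> S \<inter> deg_ge su Gr 3}"
    by (simp only: span_Un)
  then show ?thesis
    by (simp add: L_ideal_def Let_def)
qed

lemma cK_subset_L_ideal: "cK \<subseteq> I"
  unfolding L_ideal_eq by (blast intro: span_base)

lemma L_ideal_subset: "I \<subseteq> span (cK \<union> (S \<inter> deg_ge su Gr 3))"
  unfolding L_ideal_eq by (rule span_minimal[OF _ subspace_span]) (blast intro: span_base)

lemma L_ideal_subset_deg_ge: "I \<subseteq> deg_ge su Gr 2"
proof -
  have "cK \<union> (S \<inter> deg_ge su Gr 3) \<subseteq> deg_ge su Gr 2"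
    using cK_subset_deg_ge deg_ge_antimono[of 2 3] by auto
  then have "span (cK \<union> (S \<inter> deg_ge su Gr 3)) \<subseteq> deg_ge su Gr 2"
    by (rule span_minimal[OF _ subspace_deg_ge])
  with L_ideal_subset show ?thesis
    by blast
qed

lemma graded_ideal_L_ideal: "graded_ideal su bu Gr S I"
proof -
  let ?F = "{A. graded_ideal su bu Gr S A \<and> cK \<subseteq> A \<and> A \<subseteq> span (cK \<union> (S \<inter> deg_ge su Gr 3))}"
  have I_eq: "I = span (\<Union>(insert cK ?F))"
    by (simp add: L_ideal_eq)
  have members: "graded_ideal su bu Gr S A" if "A \<in> insert cK ?F" for A
  proof (cases "A = cK")
    case True
    then show ?thesis
      using cK_subset_S graded_cK bu_mem_gen_ideal subspace_gen_ideal unfolding graded_ideal_def by blast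
  qed (use that in blast)
  have "\<Union>(insert cK ?F) \<subseteq> S"
    using members unfolding graded_ideal_def by (meson Union_least)
  then have "I \<subseteq> S"
    unfolding I_eq by (rule span_minimal[OF _ subspace_S])
  moreover have "graded_set su Gr A" if "A \<in> insert cK ?F" for A
    using members[OF that] unfolding graded_ideal_def by blast
  then have "graded_set su Gr I"
    unfolding I_eq by (rule graded_span_Union)
  moreover have "bu s a \<in> I" if s: "s \<in> S" and a: "a \<in> I" for s a
  proof -
    have "\<Union>(insert cK ?F) \<subseteq> {a. bu s a \<in> I}"
    proof (intro Union_least subsetI)
      fix A b assume A: "A \<in> insert cK ?F" and b: "b \<in> A"
      have "\<forall>s\<in>S. \<forall>a\<in>A. bu s a \<in> A"
        using members[OF A] by (simp add: graded_ideal_def)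
      with s b have "bu s b \<in> \<Union>(insert cK ?F)"
        using A by (meson UnionI)
      then show "b \<in> {a. bu s a \<in> I}"
        unfolding I_eq by (simp add: span_base)
    qed
    then have "I \<subseteq> {a. bu s a \<in> I}"
      unfolding I_eq by (rule span_minimal[OF _ subspace_bu_preimage[OF subspace_span]])
    with a show ?thesis
      by blast
  qed
  moreover have "subspace I"
    unfolding I_eq by (rule subspace_span)
  ultimately show ?thesis
    unfolding graded_ideal_def by blast
qed

lemma L_ideal_maximal:
  assumes A: "graded_ideal su bu Gr S A" "I \<subseteq> A" "A \<subseteq> span (I \<union> (S \<inter> deg_ge su Gr 3))"
  shows "A \<subseteq> I"
proof -
  let ?F = "{A. graded_ideal su bu Gr S A \<and> cK \<subseteq> A \<and> A \<subseteq> span (cK \<union> (S \<inter> deg_ge su Gr 3))}"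
  have "I \<union> (S \<inter> deg_ge su Gr 3) \<subseteq> span (cK \<union> (S \<inter> deg_ge su Gr 3))"
  proof (rule Un_least[OF L_ideal_subset])
    have "S \<inter> deg_ge su Gr 3 \<subseteq> cK \<union> (S \<inter> deg_ge su Gr 3)"
      by blast
    then show "S \<inter> deg_ge su Gr 3 \<subseteq> span (cK \<union> (S \<inter> deg_ge su Gr 3))"
      using span_superset by (rule subset_trans)
  qed
  then have "span (I \<union> (S \<inter> deg_ge su Gr 3)) \<subseteq> span (cK \<union> (S \<inter> deg_ge su Gr 3))"
    by (rule span_minimal[OF _ subspace_span])
  moreover have "cK \<subseteq> A"
    using cK_subset_L_ideal A(2) by (rule subset_trans)
  ultimately have "A \<in> ?F"
    using A(1,3) by simp
  then have "A \<subseteq> cK \<union> \<Union>?F"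
    by blast
  also have "\<dots> \<subseteq> I"
    unfolding L_ideal_eq by (rule span_superset)
  finally show ?thesis .
qed

lemma subspace_L_ideal: "subspace I"
  using graded_ideal_L_ideal unfolding graded_ideal_def by blast

lemma bu_mem_L_ideal: "s \<in> S \<Longrightarrow> a \<in> I \<Longrightarrow> bu s a \<in> I"
  using graded_ideal_L_ideal unfolding graded_ideal_def by blast

lemma hcomp_mem_L_ideal: "a \<in> I \<Longrightarrow> hcomp a k \<in> I"
  using graded_ideal_L_ideal hcomp_mem_graded_subspace unfolding graded_ideal_def by blast

lemma bu_stable_L_ideal_plus_high_degree:
  assumes t: "t \<in> S" "t \<in> deg_ge su Gr 0" and a: "a \<in> span (I \<union> (S \<inter> deg_ge su Gr 3))"
  shows "bu t a \<in> span (I \<union> (S \<inter> deg_ge su Gr 3))"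
proof -
  have "I \<union> (S \<inter> deg_ge su Gr 3) \<subseteq> {a. bu t a \<in> span (I \<union> (S \<inter> deg_ge su Gr 3))}"
  proof (intro subsetI CollectI)
    fix b assume "b \<in> I \<union> (S \<inter> deg_ge su Gr 3)"
    then have "bu t b \<in> I \<union> (S \<inter> deg_ge su Gr 3)"
      using t bu_mem_L_ideal bu_mem_S bu_mem_deg_ge[OF t(2), of b 3] by auto
    then show "bu t b \<in> span (I \<union> (S \<inter> deg_ge su Gr 3))"
      by (rule span_base)
  qed
  then have "span (I \<union> (S \<inter> deg_ge su Gr 3))
      \<subseteq> {a. bu t a \<in> span (I \<union> (S \<inter> deg_ge su Gr 3))}"
    by (rule span_minimal[OF _ subspace_bu_preimage[OF subspace_span]])
  with a show ?thesis
    by blast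
qed

lemma gen_ideal_nonneg_subset:
  assumes x: "x \<in> S" "x \<in> deg_ge su Gr 3"
  shows "gen_ideal su bu (S \<inter> (\<Union>j\<in>{0..}. Gr j)) (insert x I) \<subseteq> span (I \<union> (S \<inter> deg_ge su Gr 3))"
    (is "_ \<subseteq> ?U")
proof (rule gen_ideal_minimal[OF subspace_span])
  have "insert x I \<subseteq> I \<union> (S \<inter> deg_ge su Gr 3)"
    using x by auto
  then show "insert x I \<subseteq> ?U"
    using span_superset by (rule subset_trans)
  show "\<forall>t\<in>S \<inter> (\<Union>j\<in>{0..}. Gr j). \<forall>a\<in>?U. bu t a \<in> ?U"
  proof (intro ballI)
    fix t a assume t: "t \<in> S \<inter> (\<Union>j\<in>{0..}. Gr j)" and a: "a \<in> ?U"
    then have "t \<in> deg_ge su Gr 0"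
      using Gr_subset_deg_ge[of 0] by auto
    with t a show "bu t a \<in> ?U"
      by (intro bu_stable_L_ideal_plus_high_degree) auto
  qed
qed

lemma high_degree_mem_L_ideal:
  assumes x: "x \<in> S" "x \<in> Gr k" "3 \<le> k"
    and neg: "\<And>y j. j < 0 \<Longrightarrow> y \<in> S \<Longrightarrow> y \<in> Gr j \<Longrightarrow> bu y x \<in> I"
  shows "x \<in> I"
proof -
  let ?T = "S \<inter> (\<Union>j\<in>{0..}. Gr j)"
  let ?A = "gen_ideal su bu ?T (insert x I)"
  let ?U = "span (I \<union> (S \<inter> deg_ge su Gr 3))"
  have I_A: "I \<subseteq> ?A"
    using gen_ideal_superset by blast
  have "bu y z \<in> ?A" if "j < 0" "y \<in> S" "y \<in> Gr j" "z \<in> insert x I" for y j z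
    using that neg bu_mem_L_ideal I_A gen_ideal_superset by blast
  then have A_ideal: "\<forall>s\<in>S. \<forall>a\<in>?A. bu s a \<in> ?A"
    using bu_stable_gen_ideal_nonneg[OF bu_mem_S graded_S] by blast
  have A_graded: "graded_set su Gr ?A"
  proof (rule graded_gen_ideal)
    show "graded_set su Gr ?T"
      unfolding graded_set_def by (blast intro: span_base)
    show "graded_set su Gr (insert x I)"
      using graded_ideal_L_ideal x(2) unfolding graded_ideal_def by (blast intro: graded_insert_homogeneous)
  qed
  have A_upper: "?A \<subseteq> ?U"
    using x Gr_subset_deg_ge[of 3 k] by (intro gen_ideal_nonneg_subset) auto
  have "I \<union> (S \<inter> deg_ge su Gr 3) \<subseteq> S"
    using graded_ideal_L_ideal unfolding graded_ideal_def by blast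
  then have "?U \<subseteq> S"
    by (rule span_minimal[OF _ subspace_S])
  with A_upper A_ideal A_graded have "graded_ideal su bu Gr S ?A"
    unfolding graded_ideal_def by (simp add: subspace_gen_ideal)
  then have "?A \<subseteq> I"
    using I_A A_upper by (rule L_ideal_maximal)
  then show ?thesis
    using gen_ideal_superset by blast
qed

lemma degree_two_mem_K:
  assumes x: "x \<in> Gr 2" and R: "\<And>r. r \<in> R \<Longrightarrow> bu r x = 0"
  shows "x \<in> K"
proof -
  let ?W = "gen_ideal su bu (Gr 0) {x}"
  have "bu r w = 0" if "r \<in> R" "w \<in> ?W" for r w
  proof (rule gen_ideal_annihilated[where Y = R, OF _ _ _ _ that])
    show "R \<subseteq> (\<Union>k. Gr k)" "Gr 0 \<subseteq> (\<Union>k. Gr k)"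
      using R_subset_Gr by blast+
  qed (use R bu_R_Gr0_mem_R in auto)
  then have th_W: "bu th w = 0" if "w \<in> ?W" for w
    using that gen_ideal_superset[of "{th}" "Gr 0"] R_eq_gen_ideal by blast
  have "?W \<subseteq> Gr 2"
    using x bu_mem_Gr[of _ 0 _ 2] by (intro gen_ideal_minimal[OF subspace_Gr]) auto
  then have "?W \<subseteq> K"
    using th_W by (intro K_maximal subspace_gen_ideal) (auto intro: bu_mem_gen_ideal)
  then show ?thesis
    using gen_ideal_superset by blast
qed

lemma L_ideal_transitive_positive:
  assumes x: "x \<in> S" "x \<in> deg_ge su Gr 2"
    and neg: "\<And>y. y \<in> S \<Longrightarrow> y \<in> deg_le su Gr (-1) \<Longrightarrow> bu y x \<in> I"
  shows "x \<in> I"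
proof (rule mem_subspace_if_hcomp[OF subspace_L_ideal])
  fix k
  have bracket: "bu y (hcomp x k) \<in> I" if "j < 0" "y \<in> S" "y \<in> Gr j" for y j
  proof -
    have "bu y x \<in> I"
      using that neg Gr_subset_deg_le[of j "-1"] by auto
    then show ?thesis
      using hcomp_mem_L_ideal[of "bu y x" "k + j"] hcomp_bu_homogeneous[OF that(3)] by simp
  qed
  consider "k < 2" | "k = 2" | "3 \<le> k"
    by linarith
  then show "hcomp x k \<in> I"
  proof cases
    case 1
    then show ?thesis
      using x(2) subspace_0[OF subspace_L_ideal] by (simp add: deg_ge_iff)
  next
    case 2
    have "bu r (hcomp x 2) = 0" if r: "r \<in> R" for r
    proof (rule homogeneous_deg_ge_zero)
      show "bu r (hcomp x 2) \<in> Gr 1"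
        using bu_mem_Gr[OF _ hcomp_mem_Gr[of x 2], of r "-1"] r R_subset_Gr by auto
      show "bu r (hcomp x 2) \<in> deg_ge su Gr 2"
        using 2 bracket[of "-1" r] r R_subset_Gr S_superset L_ideal_subset_deg_ge by auto
    qed simp
    then have "hcomp x 2 \<in> K"
      using degree_two_mem_K hcomp_mem_Gr by blast
    then show ?thesis
      using 2 gen_ideal_superset cK_subset_L_ideal by blast
  next
    case 3
    have "hcomp x k \<in> S"
      by (rule hcomp_mem_graded_subspace[OF subspace_S graded_S x(1)])
    with 3 show ?thesis
      using high_degree_mem_L_ideal[OF _ hcomp_mem_Gr] bracket by blast
  qed
qed

lemma L_ideal_transitive_negative:
  assumes x: "x \<in> deg_le su Gr (-1)"
    and pos: "\<And>y. y \<in> S \<Longrightarrow> y \<in> deg_ge su Gr 1 \<Longrightarrow> bu y x \<in> I"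
  shows "x = 0"
proof -
  have "hcomp x k = 0" for k
  proof (cases "k \<le> -1")
    case True
    have "bu (hcomp x k) u = 0" if u: "u \<in> Gr 1" for u
    proof -
      have "bu u x \<in> deg_ge su Gr 2"
        using pos u S_superset Gr_subset_deg_ge[of 1 1] L_ideal_subset_deg_ge by blast
      then have "bu u (hcomp x k) = 0"
        using True hcomp_bu_homogeneous[OF u, of x "k + 1"] by (simp add: deg_ge_iff)
      then show ?thesis
        using bu_antisym[OF hcomp_mem_Gr u] by simp
    qed
    then show ?thesis
      using negative_transitive[of "-k" "hcomp x k"] True hcomp_mem_Gr by simp
  qed (use x in \<open>simp add: deg_le_iff\<close>)
  then show ?thesis
    using mem_subspace_if_hcomp[OF subspace_single_0] by blast
qed

lemma quot_transitive_L: "quot_transitive su bu Gr S I (-2) 2"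
  unfolding quot_transitive_def
proof (intro conjI ballI impI)
  show "x \<in> I" if "x \<in> S \<inter> deg_ge su Gr 2" "\<forall>y\<in>S \<inter> deg_le su Gr (-1). bu y x \<in> I" for x
    using that by (auto intro!: L_ideal_transitive_positive[of x])
  show "x \<in> I" if "x \<in> S \<inter> deg_le su Gr (-2)" "\<forall>y\<in>S \<inter> deg_ge su Gr 1. bu y x \<in> I" for x
  proof -
    have "x = 0"
      using that deg_le_mono[of "-2" "-1"] by (auto intro!: L_ideal_transitive_negative)
    then show ?thesis
      using subspace_0[OF subspace_L_ideal] by simp
  qed
qed

end

lemma two_neq_zero_if_additive_embedding:
  fixes f :: "'k::field \<Rightarrow> 'b::field_char_0"
  assumes "inj f" and add: "\<And>a b. f (a + b) = f a + f b"
  shows "(2::'k) \<noteq> 0"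
proof
  assume two: "(2::'k) = 0"
  have "f 0 = 0"
    using add[of 0 0] by simp
  moreover have "f 1 + f 1 = f 0"
    using add[of 1 1] two by (simp add: one_add_one)
  ultimately have "f 1 = f 0"
    by simp
  with \<open>inj f\<close> show False
    by (simp add: inj_eq)
qed

lemma field_is_R_or_C_two_neq_zero: "field_is_R_or_C TYPE('k::field) \<Longrightarrow> (2::'k) \<noteq> 0"
  unfolding field_is_R_or_C_def
  by (metis bij_is_inj two_neq_zero_if_additive_embedding)

lemma is_U_theta_graded_superalgebra:
  fixes su :: "'k::field \<Rightarrow> 'u::ab_group_add \<Rightarrow> 'u"
  assumes U: "is_U sg bg sv act Th su bu Gr i0 i1 th"
    and "is_sigma su bu Gr th \<sigma>" and "(2::'k) \<noteq> 0"
  shows "theta_graded_superalgebra su bu Gr th \<sigma>"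
proof -
  have gls: "graded_superalgebra su bu Gr"
    using U unfolding is_U_def by (simp add: graded_superalgebra_def)
  then interpret graded_superalgebra su bu Gr .
  have "x = 0"
    if p: "1 \<le> p" and x: "x \<in> Gr (-p)" and ann: "\<And>u. u \<in> Gr 1 \<Longrightarrow> bu x u = 0" for p x
  proof -
    have "inj_on (\<lambda>x u. bu x (i1 u)) (Gr (-p))"
      using U p unfolding is_U_def by (blast intro: bij_betw_imp_inj_on)
    moreover have "i1 u \<in> Gr 1" for u
      using U unfolding is_U_def by blast
    then have "(\<lambda>u. bu x (i1 u)) = (\<lambda>u. bu 0 (i1 u))"
      using ann by simp
    ultimately show "x = 0"
      using x subspace_0[OF subspace_Gr] by (blast dest: inj_onD)
  qed
  moreover have "x = 0" if "su (1/2) x = 0" for x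
    using that \<open>(2::'k) \<noteq> 0\<close> by simp
  ultimately show ?thesis
    using assms gls unfolding theta_graded_superalgebra_def theta_graded_superalgebra_axioms_def is_U_def
    by (simp add: positive_part_free_def)
qed

theorem proposition4p8:
  fixes sg :: "'k::field \<Rightarrow> 'g::ab_group_add \<Rightarrow> 'g" and bg :: "'g \<Rightarrow> 'g \<Rightarrow> 'g"
    and sv :: "'k \<Rightarrow> 'v::ab_group_add \<Rightarrow> 'v" and act :: "'g \<Rightarrow> 'v \<Rightarrow> 'v"
    and Th :: "'v \<Rightarrow> 'g"
    and su :: "'k \<Rightarrow> 'u::ab_group_add \<Rightarrow> 'u" and bu :: "'u \<Rightarrow> 'u \<Rightarrow> 'u"
    and Gr :: "int \<Rightarrow> 'u set" and i0 :: "'g \<Rightarrow> 'u" and i1 :: "'v \<Rightarrow> 'u" and th :: 'u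
    and \<sigma> :: "'u \<Rightarrow> 'u"
  assumes "field_is_R_or_C TYPE('k)"
    and "lie_leibniz_triple sg bg sv act Th"
    and "is_U sg bg sv act Th su bu Gr i0 i1 th"
    and "is_sigma su bu Gr th \<sigma>"
  shows "quot_transitive su bu Gr (S_alg su bu Gr th) (L_ideal su bu Gr th \<sigma>) (-2) 2"
proof -
  interpret theta_graded_superalgebra su bu Gr th \<sigma>
    using assms(3,4) field_is_R_or_C_two_neq_zero[OF assms(1)] by (rule is_U_theta_graded_superalgebra)
  show ?thesis
    by (rule quot_transitive_L)
qed

end
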